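(* Let $d\geq 2$ and let $\mathcal{D}\subset\mathbb{R}^d$ be bounded and convex with non-empty interior. If $\alpha=(\alpha_1,\ldots,\alpha_d)\in\mathbb{R}^d$ is such that \[\sup_{T_1,\ldots,T_d\geq1} L(\alpha,\mathcal{D}_{T^{-1}})=\infty,\] then \[\liminf_{n\to\infty} n\,\|n\alpha_1\|_{\mathbb{R}/\mathbb{Z}}\cdots\|n\alpha_d\|_{\mathbb{R}/\mathbb{Z}}=0.\]
   Context: For a set $\mathcal{D}\subset\mathbb{R}^d$ and $q\in\mathcal{D}$, $\tau(q,\mathcal{D})=\min\{n\in\mathbb{N}^*\mid q+n\alpha\in\mathcal{D}+\mathbb{Z}^d\}$ with $\mathbb{N}^*=\{1,2,\ldots\}$, and $L(\alpha,\mathcal{D})$ is the number of distinct values of $\tau(q,\mathcal{D})$ as $q$ ranges over $\mathcal{D}$. For $T=\operatorname{diag}(T_1,\ldots,T_d)$ with $T_i>0$, $\mathcal{D}_{T^{-1}}=\{xT^{-1}\mid x\in\mathcal{D}\}$. $\|x\|_{\mathbb{R}/\mathbb{Z}}$ denotes the distance from $x$ to the nearest integer. *)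

theory Defs
  imports "HOL-Analysis.Analysis" "HOL-Library.Extended_Nat" "HOL-Library.Extended_Real"
begin

definition int_lattice :: "(real^'n) set" where
  "int_lattice = {z. \<forall>i. z $ i \<in> \<int>}"

definition returns :: "real^'n \<Rightarrow> (real^'n) set \<Rightarrow> real^'n \<Rightarrow> nat \<Rightarrow> bool" where
  "returns \<alpha> D q n \<longleftrightarrow> (\<exists>z\<in>int_lattice. q + real n *\<^sub>R \<alpha> - z \<in> D)"

definition tau :: "real^'n \<Rightarrow> (real^'n) set \<Rightarrow> real^'n \<Rightarrow> enat" where
  "tau \<alpha> D q = (if \<exists>n\<ge>1. returns \<alpha> D q n
                 then enat (LEAST n. n \<ge> 1 \<and> returns \<alpha> D q n) else \<infinity>)"

definition num_return_times :: "real^'n \<Rightarrow> (real^'n) set \<Rightarrow> enat" where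
  "num_return_times \<alpha> D = (if finite (tau \<alpha> D ` D) then enat (card (tau \<alpha> D ` D)) else \<infinity>)"

text \<open>D_{T^{-1}} = {x T^{-1} | x in D}, T = diag(T_1,...,T_d).\<close>
definition scale_inv :: "(real^'n) set \<Rightarrow> real^'n \<Rightarrow> (real^'n) set" where
  "scale_inv D T = (\<lambda>x. \<chi> i. x $ i / T $ i) ` D"

definition dist_Z :: "real \<Rightarrow> real" where
  "dist_Z x = \<bar>x - real_of_int (round x)\<bar>"

end

theory Submission
  imports Defs
begin

text \<open>
  We prove the contrapositive. If the liminf is positive, then
  \<open>n \<Prod>\<^sub>i \<parallel>n \<alpha>\<^sub>i\<parallel> \<ge> c > 0\<close> for all \<open>n \<ge> 1\<close>. For \<open>N = \<Prod>\<^sub>i T\<^sub>i\<close> the lattice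
  \<open>\<Lambda>\<^sub>T = {(n / N, ((n \<alpha>\<^sub>i - z\<^sub>i) T\<^sub>i)\<^sub>i) | n \<in> \<int>, z \<in> \<int>\<^sup>d}\<close> of covolume one is then
  \<open>c\<close>-separated in the sup norm. Counting its points in a box \<open>[-a, a]\<^sup>d\<^sup>+\<^sup>1\<close>, Dirichlet's
  pigeonhole principle gives at least \<open>a\<^sup>d\<^sup>+\<^sup>1 / 2\<^sup>d\<close> of them, while a separated set in a
  hyperplane has only \<open>O(a\<^sup>d)\<close> points; so for large \<open>a\<close> they span, and \<open>\<Lambda>\<^sub>T\<close> has a
  covering radius bounded independently of \<open>T\<close>. Rescaling \<open>T\<close> makes the radius in the last
  \<open>d\<close> coordinates as small as we like at the price of the first one. Consequently every
  \<open>q \<in> D\<^sub>T\<^sub>\<^sup>-\<^sup>1\<close> returns to a small cube inside \<open>D\<close> after \<open>O(N)\<close> steps, so each return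
  time \<open>m\<close> is the first coordinate \<open>m / N\<close> of a point of \<open>\<Lambda>\<^sub>T\<close> in a box independent of
  \<open>T\<close>. By separation there are boundedly many of them, i.e. \<open>L(\<alpha>, D\<^sub>T\<^sub>\<^sup>-\<^sup>1)\<close> is bounded.
\<close>

section \<open>Distance to the nearest integer\<close>

lemma dist_Z_nonneg: "dist_Z x \<ge> 0"
  by (simp add: dist_Z_def)

lemma dist_Z_le_one: "dist_Z x \<le> 1"
  using of_int_round_abs_le[of x] by (simp add: dist_Z_def abs_minus_commute)

lemma dist_Z_le: "dist_Z x \<le> \<bar>x - of_int k\<bar>"
  unfolding dist_Z_def by (rule round_diff_minimal)

lemma dist_Z_minus: "dist_Z (- x) = dist_Z x"
  using dist_Z_le[of "- x" "- round x"] dist_Z_le[of x "- round (- x)"]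
  by (simp add: dist_Z_def abs_minus_commute)

lemma dist_Z_eq_0_iff: "dist_Z x = 0 \<longleftrightarrow> x \<in> \<int>"
proof
  assume "dist_Z x = 0"
  then have "x = of_int (round x)"
    by (simp add: dist_Z_def)
  then show "x \<in> \<int>"
    by (metis Ints_of_int)
next
  assume "x \<in> \<int>"
  then show "dist_Z x = 0"
    by (auto simp: dist_Z_def elim!: Ints_cases)
qed

lemma dist_Z_nat_abs_mult_le: "dist_Z (real (nat \<bar>n\<bar>) * x) \<le> \<bar>of_int n * x - of_int k\<bar>"
proof (cases "n \<ge> 0")
  case True
  then show ?thesis
    using dist_Z_le[of "real (nat \<bar>n\<bar>) * x" k] by simp
next
  case False
  then have "real (nat \<bar>n\<bar>) * x = - (of_int n * x)"
    by simp
  then show ?thesis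
    using dist_Z_le[of "of_int n * x" k] dist_Z_minus by simp
qed

section \<open>Counting separated points in a box\<close>

lemma floor_divide_eq_imp_dist_less:
  fixes x y e :: real
  assumes "e > 0" and "\<lfloor>x / e\<rfloor> = \<lfloor>y / e\<rfloor>"
  shows "\<bar>x - y\<bar> < e"
proof -
  have "\<bar>x / e - y / e\<bar> < 1"
    using floor_correct[of "x / e"] floor_correct[of "y / e"] assms(2) by linarith
  then show ?thesis
    using assms(1) by (simp add: diff_divide_distrib[symmetric])
qed

lemma floor_divide_mem_range:
  fixes x A e :: real
  assumes "\<bar>x\<bar> \<le> A" and "e > 0"
  shows "\<lfloor>x / e\<rfloor> \<in> {-\<lceil>A / e\<rceil>..\<lceil>A / e\<rceil>}"
proof -
  have "\<bar>x / e\<bar> \<le> A / e"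
    using assms by (simp add: divide_right_mono)
  then have "- (A / e) \<le> x / e" "x / e \<le> A / e"
    by linarith+
  then show ?thesis
    by (simp add: le_floor_iff) linarith
qed

definition sup_separated :: "real \<Rightarrow> (real^'k) set \<Rightarrow> bool" where
  "sup_separated \<delta> S \<longleftrightarrow> (\<forall>x\<in>S. \<forall>y\<in>S. x \<noteq> y \<longrightarrow> (\<exists>k. \<delta> \<le> \<bar>x$k - y$k\<bar>))"

lemma sup_separated_subset: "sup_separated \<delta> S \<Longrightarrow> S' \<subseteq> S \<Longrightarrow> sup_separated \<delta> S'"
  unfolding sup_separated_def by blast

lemma card_le_grid:
  fixes S :: "(real^'k) set" and J :: "'k set"
  assumes e: "e > 0"
    and box: "\<And>x k. x \<in> S \<Longrightarrow> k \<in> J \<Longrightarrow> \<bar>x$k\<bar> \<le> A"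
    and sep: "\<And>x y. x \<in> S \<Longrightarrow> y \<in> S \<Longrightarrow> (\<forall>k\<in>J. \<bar>x$k - y$k\<bar> < e) \<Longrightarrow> x = y"
  shows "finite S" and "card S \<le> nat (2 * \<lceil>A / e\<rceil> + 1) ^ card J"
proof -
  define K where "K = \<lceil>A / e\<rceil>"
  define cell where "cell x = (\<lambda>k\<in>J. \<lfloor>x$k / e\<rfloor>)" for x :: "real^'k"
  have "inj_on cell S"
  proof (rule inj_onI)
    fix x y assume "x \<in> S" "y \<in> S" "cell x = cell y"
    then have "\<forall>k\<in>J. \<lfloor>x$k / e\<rfloor> = \<lfloor>y$k / e\<rfloor>"
      unfolding cell_def by (metis restrict_apply')
    then show "x = y"
      using sep[OF \<open>x \<in> S\<close> \<open>y \<in> S\<close>] e floor_divide_eq_imp_dist_less by blast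
  qed
  moreover have "cell ` S \<subseteq> PiE J (\<lambda>_. {-K..K})"
    using box e by (auto simp: cell_def K_def simp del: atLeastAtMost_iff intro!: floor_divide_mem_range)
  moreover have "finite (PiE J (\<lambda>_. {-K..K}))"
    by (simp add: finite_PiE)
  ultimately have "finite S" and "card S \<le> card (PiE J (\<lambda>_. {-K..K}))"
    by (metis finite_imageD finite_subset, metis card_image card_mono)
  then show "finite S" and "card S \<le> nat (2 * \<lceil>A / e\<rceil> + 1) ^ card J"
    by (simp_all add: card_PiE K_def)
qed

lemma card_sup_separated_le:
  fixes S :: "(real^'k) set"
  assumes "\<delta> > 0" and "sup_separated \<delta> S" and "\<forall>x\<in>S. \<forall>k. \<bar>x$k\<bar> \<le> A"
  shows "finite S" and "card S \<le> nat (2 * \<lceil>A / \<delta>\<rceil> + 1) ^ CARD('k)"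
proof -
  have "x = y" if "x \<in> S" "y \<in> S" "\<forall>k\<in>UNIV. \<bar>x$k - y$k\<bar> < \<delta>" for x y
    using assms(2) that unfolding sup_separated_def by (meson UNIV_I not_le)
  then show "finite S" "card S \<le> nat (2 * \<lceil>A / \<delta>\<rceil> + 1) ^ CARD('k)"
    using card_le_grid[of \<delta> S UNIV A] assms(1,3) by auto
qed

lemma orthogonal_dominant_coordinate:
  fixes w u :: "real^'k"
  assumes orth: "w \<bullet> u = 0" and dom: "\<And>i. \<bar>w$i\<bar> \<le> \<bar>w$j\<bar>" and "w \<noteq> 0"
  shows "\<bar>u$j\<bar> \<le> (\<Sum>i\<in>-{j}. \<bar>u$i\<bar>)"
proof -
  obtain i where "w$i \<noteq> 0"
    using \<open>w \<noteq> 0\<close> by (auto simp: vec_eq_iff)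
  then have wj: "\<bar>w$j\<bar> > 0"
    using dom[of i] by linarith
  have "w$j * u$j + (\<Sum>i\<in>-{j}. w$i * u$i) = 0"
    using orth by (simp add: inner_vec_def sum.remove[of UNIV j] Compl_eq_Diff_UNIV)
  then have "\<bar>w$j\<bar> * \<bar>u$j\<bar> = \<bar>\<Sum>i\<in>-{j}. w$i * u$i\<bar>"
    by (simp add: abs_mult[symmetric] eq_neg_iff_add_eq_0[symmetric])
  also have "\<dots> \<le> (\<Sum>i\<in>-{j}. \<bar>w$j\<bar> * \<bar>u$i\<bar>)"
    by (rule order_trans[OF sum_abs sum_mono]) (simp add: abs_mult mult_right_mono dom)
  finally show ?thesis
    using wj by (simp add: sum_distrib_left[symmetric])
qed

lemma card_sup_separated_orthogonal_le:
  fixes S :: "(real^'k) set" and w :: "real^'k"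
  assumes "CARD('k) \<ge> 2" and "\<delta> > 0" and sep: "sup_separated \<delta> S"
    and box: "\<forall>x\<in>S. \<forall>k. \<bar>x$k\<bar> \<le> A"
    and "w \<noteq> 0" and orth: "\<forall>x\<in>S. w \<bullet> x = 0"
  shows "card S \<le> nat (2 * \<lceil>A / (\<delta> / (CARD('k) - 1))\<rceil> + 1) ^ (CARD('k) - 1)"
proof -
  have "Max (range (\<lambda>i. \<bar>w$i\<bar>)) \<in> range (\<lambda>i. \<bar>w$i\<bar>)"
    by (rule Max_in) auto
  then obtain j where "\<bar>w$j\<bar> = Max (range (\<lambda>i. \<bar>w$i\<bar>))"
    by (metis imageE)
  then have dom: "\<And>i. \<bar>w$i\<bar> \<le> \<bar>w$j\<bar>"
    by simp
  define e where "e = \<delta> / (CARD('k) - 1)"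
  have card_J: "card (-{j}) = CARD('k) - 1"
    by (simp add: Compl_eq_Diff_UNIV card_Diff_singleton)
  have e: "e > 0" "real (card (-{j})) * e = \<delta>"
    using assms(1,2) by (auto simp: e_def card_J)
  have "x = y" if "x \<in> S" "y \<in> S" and close: "\<forall>k\<in>-{j}. \<bar>x$k - y$k\<bar> < e" for x y
  proof (rule ccontr)
    assume "x \<noteq> y"
    have "\<bar>(x - y)$j\<bar> \<le> (\<Sum>i\<in>-{j}. \<bar>(x - y)$i\<bar>)"
      using orth that \<open>w \<noteq> 0\<close> by (intro orthogonal_dominant_coordinate[OF _ dom]) (auto simp: inner_diff_right)
    also have "\<dots> < (\<Sum>i\<in>-{j}. e)"
      using close card_J assms(1) by (intro sum_strict_mono) (auto simp: card_gt_0_iff)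
    finally have "\<bar>x$j - y$j\<bar> < \<delta>" using e by simp
    moreover have "e \<le> \<delta>"
      using assms(1,2) by (simp add: e_def divide_le_eq)
    ultimately show False
      using sep that \<open>x \<noteq> y\<close> close unfolding sup_separated_def
      by (metis ComplI not_le order_less_le_trans singletonD)
  qed
  then show ?thesis
    using card_le_grid(2)[OF e(1), of S "-{j}" A] box card_J by (simp add: e_def)
qed

lemma ex_large_fibre:
  assumes "finite X" "finite Y" "g ` X \<subseteq> Y" "Y \<noteq> {}"
  shows "\<exists>y\<in>Y. card X \<le> card Y * card {x\<in>X. g x = y}"
proof (rule ccontr)
  assume "\<not> ?thesis"
  then have less: "card Y * card {x\<in>X. g x = y} < card X" if "y \<in> Y" for y
    using that by auto
  have "card Y * card X = card Y * (\<Sum>y\<in>Y. card {x\<in>X. g x = y})"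
    using sum.group[OF assms(1-3), of "\<lambda>_. 1::nat"] by simp
  also have "\<dots> = (\<Sum>y\<in>Y. card Y * card {x\<in>X. g x = y})"
    by (simp add: sum_distrib_left)
  also have "\<dots> < (\<Sum>y\<in>Y. card X)"
    using assms(2,4) less by (intro sum_strict_mono) auto
  finally show False
    by simp
qed

lemma ex_int_combination_near:
  fixes S :: "(real^'k) set" and a :: real
  assumes "finite S" and "span S = UNIV" and box: "\<forall>v\<in>S. \<forall>k. \<bar>v$k\<bar> \<le> a"
  shows "\<exists>u. \<forall>k. \<bar>(\<Sum>v\<in>S. of_int (u v) *\<^sub>R v)$k - y$k\<bar> \<le> real (card S) * a"
proof -
  have "y \<in> span S"
    using assms(2) by simp
  then obtain r where y: "y = (\<Sum>v\<in>S. r v *\<^sub>R v)"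
    using span_finite[OF assms(1)] by auto
  have "\<bar>(\<Sum>v\<in>S. of_int \<lfloor>r v\<rfloor> *\<^sub>R v)$k - y$k\<bar> \<le> real (card S) * a" for k
  proof -
    have "\<bar>(\<Sum>v\<in>S. of_int \<lfloor>r v\<rfloor> *\<^sub>R v)$k - y$k\<bar> = \<bar>\<Sum>v\<in>S. (of_int \<lfloor>r v\<rfloor> - r v) * v$k\<bar>"
      by (simp add: y sum_subtractf left_diff_distrib)
    also have "\<dots> \<le> (\<Sum>v\<in>S. \<bar>of_int \<lfloor>r v\<rfloor> - r v\<bar> * \<bar>v$k\<bar>)"
      by (rule order_trans[OF sum_abs]) (simp add: abs_mult)
    also have "\<dots> \<le> (\<Sum>v\<in>S. 1 * a)"
    proof (rule sum_mono)
      fix v assume "v \<in> S"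
      have "\<bar>of_int \<lfloor>r v\<rfloor> - r v\<bar> \<le> 1"
        by linarith
      then show "\<bar>of_int \<lfloor>r v\<rfloor> - r v\<bar> * \<bar>v$k\<bar> \<le> 1 * a"
        using box \<open>v \<in> S\<close> by (intro mult_mono) auto
    qed
    finally show ?thesis
      by simp
  qed
  then show ?thesis
    by (intro exI[of _ "\<lambda>v. \<lfloor>r v\<rfloor>"]) blast
qed

section \<open>The Dirichlet lattice\<close>

lemma card_UNIV_option_finite: "CARD('k::finite option) = Suc CARD('k)"
  by (simp add: UNIV_option_conv card_image)

text \<open>The lattice \<open>\<Lambda>\<^sub>T\<close> lives in \<open>real^('n option)\<close>: coordinate \<open>None\<close> is the time
  coordinate \<open>n / N\<close>, coordinate \<open>Some i\<close> the rescaled error \<open>(n \<alpha>\<^sub>i - z\<^sub>i) T\<^sub>i\<close>.\<close>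
definition dirichlet_point :: "real^'n \<Rightarrow> real^'n \<Rightarrow> int \<Rightarrow> int^'n \<Rightarrow> real^('n option)" where
  "dirichlet_point \<alpha> T n z = (\<chi> k. case k of
     None \<Rightarrow> of_int n / (\<Prod>i\<in>UNIV. T$i)
   | Some i \<Rightarrow> (of_int n * \<alpha>$i - of_int (z$i)) * T$i)"

lemma dirichlet_point_None [simp]:
  "dirichlet_point \<alpha> T n z $ None = of_int n / (\<Prod>i\<in>UNIV. T$i)"
  by (simp add: dirichlet_point_def)

lemma dirichlet_point_Some [simp]:
  "dirichlet_point \<alpha> T n z $ Some i = (of_int n * \<alpha>$i - of_int (z$i)) * T$i"
  by (simp add: dirichlet_point_def)

lemma dirichlet_point_zero: "dirichlet_point \<alpha> T 0 0 = 0"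
  by (simp add: dirichlet_point_def vec_eq_iff split: option.split)

lemma dirichlet_point_add:
  "dirichlet_point \<alpha> T n z + dirichlet_point \<alpha> T m w = dirichlet_point \<alpha> T (n + m) (z + w)"
  by (simp add: dirichlet_point_def vec_eq_iff add_divide_distrib algebra_simps split: option.split)

lemma dirichlet_point_diff:
  "dirichlet_point \<alpha> T n z - dirichlet_point \<alpha> T m w = dirichlet_point \<alpha> T (n - m) (z - w)"
  by (simp add: dirichlet_point_def vec_eq_iff diff_divide_distrib algebra_simps split: option.split)

lemma of_int_scaleR_dirichlet_point:
  "of_int k *\<^sub>R dirichlet_point \<alpha> T n z = dirichlet_point \<alpha> T (k * n) (k *s z)"
  by (simp add: dirichlet_point_def vec_eq_iff algebra_simps split: option.split)

definition dirichlet_lattice :: "real^'n \<Rightarrow> real^'n \<Rightarrow> (real^('n option)) set" where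
  "dirichlet_lattice \<alpha> T = range (\<lambda>(n, z). dirichlet_point \<alpha> T n z)"

lemma dirichlet_point_in_lattice [simp]: "dirichlet_point \<alpha> T n z \<in> dirichlet_lattice \<alpha> T"
  by (auto simp: dirichlet_lattice_def)

lemma int_combination_in_dirichlet_lattice:
  assumes "finite F" and "F \<subseteq> dirichlet_lattice \<alpha> T"
  shows "(\<Sum>v\<in>F. of_int (u v) *\<^sub>R v) \<in> dirichlet_lattice \<alpha> T"
  using assms
proof (induction F rule: finite_induct)
  case empty
  show ?case
    using dirichlet_point_in_lattice[of \<alpha> T 0 0] by (simp add: dirichlet_point_zero)
next
  case (insert v F)
  then obtain n z m w where "v = dirichlet_point \<alpha> T n z"
      and "(\<Sum>v\<in>F. of_int (u v) *\<^sub>R v) = dirichlet_point \<alpha> T m w"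
    by (auto simp: dirichlet_lattice_def)
  with insert show ?case
    by (simp add: of_int_scaleR_dirichlet_point dirichlet_point_add)
qed

definition lattice_box :: "real^'n \<Rightarrow> real^'n \<Rightarrow> real \<Rightarrow> (real^('n option)) set" where
  "lattice_box \<alpha> T a = {p \<in> dirichlet_lattice \<alpha> T. \<forall>k. \<bar>p$k\<bar> \<le> a}"

lemma dist_Z_mult_le_dirichlet_point:
  assumes "\<forall>i. 0 \<le> T$i"
  shows "dist_Z (real (nat \<bar>n\<bar>) * \<alpha>$i) * T$i \<le> \<bar>dirichlet_point \<alpha> T n z $ Some i\<bar>"
  using dist_Z_nat_abs_mult_le[of n "\<alpha>$i" "z$i"] assms by (simp add: abs_mult mult_right_mono)

lemma dirichlet_point_time_zero_ge:
  assumes T: "\<forall>i. 1 \<le> T$i" and "z \<noteq> 0"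
  shows "\<exists>i. 1 \<le> \<bar>dirichlet_point \<alpha> T 0 z $ Some i\<bar>"
proof -
  obtain i where "z$i \<noteq> 0"
    using \<open>z \<noteq> 0\<close> by (auto simp: vec_eq_iff)
  then have "1 \<le> \<bar>of_int (z$i) :: real\<bar>"
    by linarith
  moreover have "1 \<le> \<bar>T$i\<bar>"
    using T by (metis abs_ge_self order_trans)
  ultimately have "1 * 1 \<le> \<bar>of_int (z$i)\<bar> * \<bar>T$i\<bar>"
    by (intro mult_mono) auto
  then show ?thesis
    by (auto simp: abs_mult)
qed

lemma dirichlet_point_scaleR_close:
  fixes \<alpha> T :: "real^'n"
  assumes "l > 0"
    and close: "\<forall>k. \<bar>dirichlet_point \<alpha> (l *\<^sub>R T) n z $ k
      - (\<chi> k. case k of None \<Rightarrow> y0 / l ^ CARD('n) | Some i \<Rightarrow> l * yv$i) $ k\<bar> \<le> E"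
  shows "\<bar>dirichlet_point \<alpha> T n z $ None - y0\<bar> \<le> E * l ^ CARD('n)"
    and "\<bar>dirichlet_point \<alpha> T n z $ Some i - yv$i\<bar> \<le> E / l"
proof -
  have "dirichlet_point \<alpha> (l *\<^sub>R T) n z $ None - y0 / l ^ CARD('n)
      = (dirichlet_point \<alpha> T n z $ None - y0) / l ^ CARD('n)"
    by (simp add: prod.distrib diff_divide_distrib)
  then show "\<bar>dirichlet_point \<alpha> T n z $ None - y0\<bar> \<le> E * l ^ CARD('n)"
    using close[rule_format, of None] \<open>l > 0\<close> by (simp add: divide_le_eq)
  have "dirichlet_point \<alpha> (l *\<^sub>R T) n z $ Some i - l * yv$i
      = l * (dirichlet_point \<alpha> T n z $ Some i - yv$i)"
    by (simp add: algebra_simps)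
  then show "\<bar>dirichlet_point \<alpha> T n z $ Some i - yv$i\<bar> \<le> E / l"
    using close[rule_format, of "Some i"] \<open>l > 0\<close> by (simp add: abs_mult le_divide_eq mult.commute)
qed

lemma floor_frac_mult_divide_mem:
  assumes "0 \<le> b" and "0 < a"
  shows "\<lfloor>frac x * b / a\<rfloor> \<in> {0..\<lfloor>b / a\<rfloor>}"
  using assms frac_lt_1[of x]
  by (simp add: floor_mono divide_right_mono mult_left_le_one_le)

lemma card_frac_cells_le:
  fixes T :: "real^'n"
  assumes a: "a \<ge> 1" and T: "\<forall>i. a \<le> T$i"
  shows "real (card (PiE UNIV (\<lambda>i. {0..\<lfloor>T$i / a\<rfloor>}))) \<le> (2 / a) ^ CARD('n) * (\<Prod>i\<in>UNIV. T$i)"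
proof -
  have "real (card (PiE UNIV (\<lambda>i. {0..\<lfloor>T$i / a\<rfloor>}))) = (\<Prod>i\<in>UNIV. real (nat (\<lfloor>T$i / a\<rfloor> + 1)))"
    by (simp add: card_PiE)
  also have "\<dots> \<le> (\<Prod>i\<in>UNIV. 2 / a * T$i)"
  proof (rule prod_mono)
    fix i
    have "1 \<le> T$i / a"
      using T a by (simp add: le_divide_eq)
    then show "0 \<le> real (nat (\<lfloor>T$i / a\<rfloor> + 1)) \<and> real (nat (\<lfloor>T$i / a\<rfloor> + 1)) \<le> 2 / a * T$i"
      by simp linarith
  qed
  also have "\<dots> = (2 / a) ^ CARD('n) * (\<Prod>i\<in>UNIV. T$i)"
    by (simp only: prod.distrib prod_constant)
  finally show ?thesis .
qed

lemma dirichlet_point_diff_floor_in_lattice_box: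
  fixes \<alpha> T :: "real^'n"
  assumes "a > 0" and T: "\<forall>i. T$i > 0" and n: "\<bar>real n - real n0\<bar> \<le> a * (\<Prod>i\<in>UNIV. T$i)"
    and cell: "\<forall>i. \<lfloor>frac (real n * \<alpha>$i) * T$i / a\<rfloor> = \<lfloor>frac (real n0 * \<alpha>$i) * T$i / a\<rfloor>"
  shows "dirichlet_point \<alpha> T (int n - int n0) (\<chi> i. \<lfloor>real n * \<alpha>$i\<rfloor> - \<lfloor>real n0 * \<alpha>$i\<rfloor>)
    \<in> lattice_box \<alpha> T a"
proof -
  have "(\<Prod>i\<in>UNIV. T$i) > 0"
    using T by (simp add: prod_pos)
  then have "\<bar>real n - real n0\<bar> / (\<Prod>i\<in>UNIV. T$i) \<le> a"
    using n by (simp add: divide_le_eq)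
  moreover have "\<bar>(frac (real n * \<alpha>$i) - frac (real n0 * \<alpha>$i)) * T$i\<bar> \<le> a" for i
    using floor_divide_eq_imp_dist_less[OF \<open>a > 0\<close> cell[rule_format, of i]]
    by (simp add: left_diff_distrib)
  ultimately show ?thesis
    using \<open>(\<Prod>i\<in>UNIV. T$i) > 0\<close>
    by (auto simp: lattice_box_def split_option_all frac_def algebra_simps)
qed

text \<open>Dirichlet's pigeonhole argument: many \<open>n \<in> {0, \<dots>, \<lfloor>a N\<rfloor>}\<close> have their fractional
  parts \<open>frac (n \<alpha>\<^sub>i)\<close> in a common cell of side \<open>a / T\<^sub>i\<close>; differences of such \<open>n\<close> give
  distinct points of \<open>\<Lambda>\<^sub>T\<close> in the box.\<close>
lemma ex_large_frac_cell:
  fixes \<alpha> T :: "real^'n"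
  assumes a: "a \<ge> 1" and T: "\<forall>i. a \<le> T$i"
  shows "\<exists>C. finite C \<and> a ^ (CARD('n) + 1) / 2 ^ CARD('n) \<le> card C
    \<and> (\<forall>n\<in>C. real n \<le> a * (\<Prod>i\<in>UNIV. T$i))
    \<and> (\<forall>n\<in>C. \<forall>m\<in>C. \<forall>i. \<lfloor>frac (real n * \<alpha>$i) * T$i / a\<rfloor> = \<lfloor>frac (real m * \<alpha>$i) * T$i / a\<rfloor>)"
proof -
  define N where "N = (\<Prod>i\<in>UNIV. T$i)"
  have T0: "\<forall>i. T$i > 0"
    using T a by (meson less_le_trans zero_less_one)
  then have N: "N > 0"
    unfolding N_def by (simp add: prod_pos)
  define M where "M = nat \<lfloor>a * N\<rfloor>"
  have "a * N > 0"
    using a N by simp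
  then have M: "real M \<le> a * N" "a * N \<le> real M + 1"
    unfolding M_def by linarith+
  define cell where "cell n = (\<lambda>i. \<lfloor>frac (real n * \<alpha>$i) * T$i / a\<rfloor>)" for n :: nat
  define Y where "Y = PiE UNIV (\<lambda>i. {0..\<lfloor>T$i / a\<rfloor>})"
  have cells: "cell ` {0..M} \<subseteq> Y"
    using a T0 unfolding cell_def Y_def PiE_UNIV_domain
    by (auto intro!: floor_frac_mult_divide_mem simp del: atLeastAtMost_iff simp: less_imp_le)
  then have "Y \<noteq> {}"
    by auto
  moreover have "finite Y"
    by (simp add: Y_def finite_PiE)
  ultimately obtain y where fibre: "card {0..M} \<le> card Y * card {n\<in>{0..M}. cell n = y}"
    using ex_large_fibre[OF _ _ cells] by auto
  define C where "C = {n\<in>{0..M}. cell n = y}"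
  have "a * N \<le> real (card {0..M})"
    using M(2) by simp
  also have "\<dots> \<le> real (card Y) * real (card C)"
    using fibre unfolding C_def by (metis of_nat_le_iff of_nat_mult)
  also have "\<dots> \<le> (2 / a) ^ CARD('n) * N * real (card C)"
    using card_frac_cells_le[OF a T] by (intro mult_right_mono) (simp_all add: Y_def N_def)
  finally have "a \<le> (2 / a) ^ CARD('n) * real (card C)"
    using N by (simp add: mult.commute mult.left_commute)
  then have "a ^ (CARD('n) + 1) / 2 ^ CARD('n) \<le> card C"
    using a by (simp add: field_simps)
  moreover have "\<forall>n\<in>C. real n \<le> a * N"
    using M(1) by (auto simp: C_def)
  moreover have "\<lfloor>frac (real n * \<alpha>$i) * T$i / a\<rfloor> = \<lfloor>frac (real m * \<alpha>$i) * T$i / a\<rfloor>"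
    if "n \<in> C" "m \<in> C" for n m i
  proof -
    have "cell n = cell m"
      using that by (simp add: C_def)
    then have "cell n i = cell m i"
      by simp
    then show ?thesis
      by (simp add: cell_def)
  qed
  moreover have "finite C"
    by (simp add: C_def)
  ultimately show ?thesis
    unfolding N_def by blast
qed

lemma card_lattice_box_ge:
  fixes \<alpha> T :: "real^'n"
  assumes a: "a \<ge> 1" and T: "\<forall>i. a \<le> T$i"
  shows "\<exists>G \<subseteq> lattice_box \<alpha> T a. finite G \<and> a ^ (CARD('n) + 1) / 2 ^ CARD('n) \<le> card G"
proof -
  obtain C where "finite C" and cardC: "a ^ (CARD('n) + 1) / 2 ^ CARD('n) \<le> card C"
    and small: "\<forall>n\<in>C. real n \<le> a * (\<Prod>i\<in>UNIV. T$i)"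
    and cell: "\<forall>n\<in>C. \<forall>m\<in>C. \<forall>i. \<lfloor>frac (real n * \<alpha>$i) * T$i / a\<rfloor> = \<lfloor>frac (real m * \<alpha>$i) * T$i / a\<rfloor>"
    using ex_large_frac_cell[OF a T] by blast
  have "0 < a ^ (CARD('n) + 1) / 2 ^ CARD('n)"
    using a by simp
  then have "0 < card C"
    using cardC by linarith
  then obtain n0 where n0: "n0 \<in> C"
    by (auto simp: card_gt_0_iff)
  have T0: "\<forall>i. T$i > 0"
    using T a by (meson less_le_trans zero_less_one)
  then have Tne: "\<And>i. T$i \<noteq> 0"
    by (metis less_irrefl)
  define point where
    "point n = dirichlet_point \<alpha> T (int n - int n0) (\<chi> i. \<lfloor>real n * \<alpha>$i\<rfloor> - \<lfloor>real n0 * \<alpha>$i\<rfloor>)" for n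
  have inj: "inj_on point C"
  proof (rule inj_onI)
    fix m n assume "point m = point n"
    then have "point m $ None = point n $ None"
      by simp
    then show "m = n"
      using Tne by (simp add: point_def)
  qed
  have "point n \<in> lattice_box \<alpha> T a" if "n \<in> C" for n
    unfolding point_def
  proof (rule dirichlet_point_diff_floor_in_lattice_box[OF _ T0])
    show "0 < a"
      using a by simp
    have "real n \<le> a * (\<Prod>i\<in>UNIV. T$i)" "real n0 \<le> a * (\<Prod>i\<in>UNIV. T$i)"
      using small that n0 by blast+
    then show "\<bar>real n - real n0\<bar> \<le> a * (\<Prod>i\<in>UNIV. T$i)"
      by (intro abs_leI) linarith+
    show "\<forall>i. \<lfloor>frac (real n * \<alpha>$i) * T$i / a\<rfloor> = \<lfloor>frac (real n0 * \<alpha>$i) * T$i / a\<rfloor>"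
      using cell that n0 by blast
  qed
  then have "point ` C \<subseteq> lattice_box \<alpha> T a"
    by blast
  then show ?thesis
    using cardC card_image[OF inj] \<open>finite C\<close> by (intro exI[of _ "point ` C"] conjI) auto
qed

lemma ex_box_size:
  fixes d :: nat and c :: real
  assumes d: "d \<ge> 1" and c: "0 < c" "c \<le> 1"
  shows "\<exists>a\<ge>1. real (nat (2 * \<lceil>a / (c / d)\<rceil> + 1) ^ d) < a ^ (d + 1) / 2 ^ d"
proof -
  define a where "a = (10 * d / c) ^ d + 1"
  have a: "a \<ge> 1"
    using c by (simp add: a_def)
  have ad: "1 \<le> a / (c / d)"
  proof -
    have "1 \<le> d / c"
      using d c by (simp add: le_divide_eq)
    then have "1 * 1 \<le> a * (d / c)"
      using a by (intro mult_mono) auto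
    then show ?thesis
      by simp
  qed
  have "real_of_int (2 * \<lceil>a / (c / d)\<rceil> + 1) \<le> 2 * (a / (c / d)) + 3"
    by linarith
  also have "\<dots> \<le> 5 * (a / (c / d))"
    using ad by simp
  finally have "real (nat (2 * \<lceil>a / (c / d)\<rceil> + 1)) \<le> 5 * (a / (c / d))"
    using ad by simp
  then have "real (nat (2 * \<lceil>a / (c / d)\<rceil> + 1) ^ d) \<le> (5 * (a / (c / d))) ^ d"
    by (metis of_nat_0_le_iff of_nat_power power_mono)
  also have "\<dots> = (a * (5 * d / c)) ^ d"
    by (simp add: field_simps)
  also have "\<dots> = a ^ d * (5 * d / c) ^ d"
    by (rule power_mult_distrib)
  also have "\<dots> < a ^ d * (a / 2 ^ d)"
  proof -
    have "2 ^ d * (5 * d / c) ^ d = (10 * d / c) ^ d"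
      by (simp flip: power_mult_distrib)
    then have "2 ^ d * (5 * d / c) ^ d < a"
      by (simp add: a_def)
    then have "(5 * d / c) ^ d < a / 2 ^ d"
      by (simp add: field_simps)
    moreover have "0 < a ^ d"
      using a by simp
    ultimately show ?thesis
      by (rule mult_strict_left_mono)
  qed
  finally show ?thesis
    using a by (intro exI[of _ a]) (simp add: mult.commute)
qed

section \<open>Return times\<close>

lemma mem_scale_inv_iff:
  fixes T :: "real^'n"
  assumes "\<forall>i. T$i > 0"
  shows "u \<in> scale_inv D T \<longleftrightarrow> (\<chi> i. u$i * T$i) \<in> D"
proof -
  have comp: "u$i = x$i / T$i \<longleftrightarrow> x$i = u$i * T$i" for x i
    using assms[rule_format, of i] by (auto simp: eq_divide_eq)
  have "u = (\<chi> i. x$i / T$i) \<longleftrightarrow> x = (\<chi> i. u$i * T$i)" for x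
    unfolding vec_eq_iff vec_lambda_beta by (simp only: comp)
  then show ?thesis
    unfolding scale_inv_def image_iff by simp
qed

lemma return_point_bounded:
  fixes \<alpha> T :: "real^'n"
  assumes T: "\<forall>i. T$i > 0" and B: "\<forall>x\<in>D. \<forall>i. \<bar>x$i\<bar> \<le> B"
    and q: "q \<in> scale_inv D T" and ret: "returns \<alpha> (scale_inv D T) q m"
  shows "\<exists>z. \<forall>i. \<bar>dirichlet_point \<alpha> T (int m) z $ Some i\<bar> \<le> 2 * B"
proof -
  obtain w where w: "w \<in> int_lattice" and "q + real m *\<^sub>R \<alpha> - w \<in> scale_inv D T"
    using ret unfolding returns_def by blast
  define x1 where "x1 = (\<chi> i. (q$i + real m * \<alpha>$i - w$i) * T$i)"
  define x0 where "x0 = (\<chi> i. q$i * T$i)"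
  have "x1 \<in> D"
    using \<open>q + real m *\<^sub>R \<alpha> - w \<in> scale_inv D T\<close> mem_scale_inv_iff[OF T] by (simp add: x1_def)
  moreover have "x0 \<in> D"
    using q mem_scale_inv_iff[OF T] by (simp add: x0_def)
  moreover define z where "z = (\<chi> i. \<lfloor>w$i\<rfloor>)"
  have "of_int (z$i) = w$i" for i
    using w unfolding int_lattice_def z_def by (auto elim!: Ints_cases)
  then have "dirichlet_point \<alpha> T (int m) z $ Some i = x1$i - x0$i" for i
    by (simp add: x1_def x0_def algebra_simps)
  ultimately have "\<bar>dirichlet_point \<alpha> T (int m) z $ Some i\<bar> \<le> 2 * B" for i
    using B abs_triangle_ineq4[of "x1$i" "x0$i"] by (metis mult_2 add_mono order_trans)
  then show ?thesis
    by blast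
qed

lemma tau_eq_Least:
  assumes "returns \<alpha> D q n" and "n \<ge> 1"
  shows "\<exists>m. tau \<alpha> D q = enat m \<and> m \<le> n \<and> returns \<alpha> D q m"
proof -
  have ex: "1 \<le> n \<and> returns \<alpha> D q n"
    using assms by simp
  define m where "m = (LEAST k. 1 \<le> k \<and> returns \<alpha> D q k)"
  have "tau \<alpha> D q = enat m"
    unfolding tau_def m_def using ex by auto
  moreover have "returns \<alpha> D q m" and "m \<le> n"
    unfolding m_def
    using LeastI[of "\<lambda>k. 1 \<le> k \<and> returns \<alpha> D q k", OF ex]
      Least_le[of "\<lambda>k. 1 \<le> k \<and> returns \<alpha> D q k", OF ex] by auto
  ultimately show ?thesis
    by blast
qed

lemma returns_into_cube:
  fixes \<alpha> T x x0 :: "real^'n"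
  assumes T: "\<forall>i. T$i > 0" and "n \<ge> 0"
    and cube: "\<forall>y. (\<forall>i. \<bar>y$i - x0$i\<bar> \<le> r) \<longrightarrow> y \<in> D"
    and close: "\<forall>i. \<bar>dirichlet_point \<alpha> T n z $ Some i - (x0 - x)$i\<bar> \<le> r"
  shows "returns \<alpha> (scale_inv D T) (\<chi> i. x$i / T$i) (nat n)"
proof -
  define w where "w = (\<chi> i. real_of_int (z$i))"
  have "(\<chi> i. ((\<chi> i. x$i / T$i) + real (nat n) *\<^sub>R \<alpha> - w)$i * T$i)
      = (\<chi> i. x$i + dirichlet_point \<alpha> T n z $ Some i)"
    using T \<open>n \<ge> 0\<close> by (simp add: vec_eq_iff w_def algebra_simps less_imp_neq[symmetric])
  also have "\<dots> \<in> D"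
    using cube close by (auto simp: algebra_simps)
  finally have "(\<chi> i. x$i / T$i) + real (nat n) *\<^sub>R \<alpha> - w \<in> scale_inv D T"
    unfolding mem_scale_inv_iff[OF T] .
  moreover have "w \<in> int_lattice"
    by (simp add: w_def int_lattice_def)
  ultimately show ?thesis
    unfolding returns_def by blast
qed

text \<open>Aim the Dirichlet lattice at the point \<open>(C + 1, x\<^sub>0 - x)\<close>: the resulting \<open>n\<close> is a
  return time of \<open>q = x T\<^sup>-\<^sup>1\<close> into the cube around \<open>x\<^sub>0\<close>, with \<open>1 \<le> n / N \<le> 2 C + 1\<close>.\<close>
lemma tau_le_by_covering:
  fixes \<alpha> T x0 :: "real^'n"
  assumes T: "\<forall>i. 1 \<le> T$i"
    and cube: "\<forall>x. (\<forall>i. \<bar>x$i - x0$i\<bar> \<le> r) \<longrightarrow> x \<in> D"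
    and B: "\<forall>x\<in>D. \<forall>i. \<bar>x$i\<bar> \<le> B"
    and cov: "\<forall>y0 yv. \<exists>n z. \<bar>dirichlet_point \<alpha> T n z $ None - y0\<bar> \<le> C
                 \<and> (\<forall>i. \<bar>dirichlet_point \<alpha> T n z $ Some i - yv$i\<bar> \<le> r)"
    and q: "q \<in> scale_inv D T"
  shows "\<exists>m z. tau \<alpha> (scale_inv D T) q = enat m
    \<and> (\<forall>k. \<bar>dirichlet_point \<alpha> T (int m) z $ k\<bar> \<le> max (2 * C + 1) (2 * B))"
proof -
  define N where "N = (\<Prod>i\<in>UNIV. T$i)"
  have T0: "\<forall>i. T$i > 0"
    using T by (meson less_le_trans zero_less_one)
  have N: "N \<ge> 1"
    unfolding N_def using T by (simp add: prod_ge_1)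
  obtain x where x: "x \<in> D" "q = (\<chi> i. x$i / T$i)"
    using q unfolding scale_inv_def by auto
  obtain n z where n: "\<bar>dirichlet_point \<alpha> T n z $ None - (C + 1)\<bar> \<le> C"
    and z: "\<forall>i. \<bar>dirichlet_point \<alpha> T n z $ Some i - (x0 - x)$i\<bar> \<le> r"
    using cov by blast
  have "1 \<le> of_int n / N" "of_int n / N \<le> 2 * C + 1"
    using n unfolding dirichlet_point_None N_def[symmetric] by linarith+
  then have "1 \<le> n" and n_le: "of_int n \<le> (2 * C + 1) * N"
    using N by (simp_all add: le_divide_eq divide_le_eq)
  then have "returns \<alpha> (scale_inv D T) q (nat n)"
    using returns_into_cube[OF T0 _ cube z] x(2) by simp
  then obtain m where tau: "tau \<alpha> (scale_inv D T) q = enat m"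
    and "m \<le> nat n" and m_ret: "returns \<alpha> (scale_inv D T) q m"
    using tau_eq_Least \<open>1 \<le> n\<close> by fastforce
  then have "real m / N \<le> 2 * C + 1"
    using n_le N \<open>1 \<le> n\<close> by (simp add: divide_le_eq)
  moreover obtain z' where "\<forall>i. \<bar>dirichlet_point \<alpha> T (int m) z' $ Some i\<bar> \<le> 2 * B"
    using return_point_bounded[OF T0 B q m_ret] by blast
  ultimately have "\<forall>k. \<bar>dirichlet_point \<alpha> T (int m) z' $ k\<bar> \<le> max (2 * C + 1) (2 * B)"
    using N by (auto simp: split_option_all N_def[symmetric] le_max_iff_disj)
  with tau show ?thesis
    by blast
qed

section \<open>Multiplicatively badly approximable vectors\<close>

locale mult_badly_approximable =
  fixes \<alpha> :: "real^'n" and c :: real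
  assumes pos: "c > 0"
    and approx_ge: "\<And>m::nat. m \<ge> 1 \<Longrightarrow> c \<le> real m * (\<Prod>i\<in>UNIV. dist_Z (real m * \<alpha>$i))"
begin

lemma le_one: "c \<le> 1"
proof -
  have "(\<Prod>i\<in>UNIV. dist_Z (\<alpha>$i)) \<le> (\<Prod>i\<in>(UNIV::'n set). 1)"
    by (intro prod_mono) (simp add: dist_Z_nonneg dist_Z_le_one)
  then show ?thesis
    using approx_ge[of 1] by simp
qed

lemma dirichlet_point_nonzero_ge:
  assumes T: "\<forall>i. 1 \<le> T$i" and nz: "(n, z) \<noteq> (0, 0)"
  shows "\<exists>k. c \<le> \<bar>dirichlet_point \<alpha> T n z $ k\<bar>"
proof (rule ccontr)
  assume "\<not> ?thesis"
  then have small: "\<And>k. \<bar>dirichlet_point \<alpha> T n z $ k\<bar> < c"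
    by (simp add: not_le)
  show False
  proof (cases "n = 0")
    case True
    then obtain i where "1 \<le> \<bar>dirichlet_point \<alpha> T 0 z $ Some i\<bar>"
      using dirichlet_point_time_zero_ge[OF T] nz by auto
    then show False
      using small[of "Some i"] True le_one by simp
  next
    case False
    define m where "m = nat \<bar>n\<bar>"
    define N where "N = (\<Prod>i\<in>UNIV. T$i)"
    have T0: "\<forall>i. 0 \<le> T$i"
      using T by (meson order_trans zero_le_one)
    have N: "N > 0"
      unfolding N_def using T by (intro prod_pos) (meson less_le_trans zero_less_one)
    have "m \<ge> 1"
      using False by (simp add: m_def)
    then have "c \<le> real m * (\<Prod>i\<in>UNIV. dist_Z (real m * \<alpha>$i))"
      by (rule approx_ge)
    also have "\<dots> = (real m / N) * (\<Prod>i\<in>UNIV. dist_Z (real m * \<alpha>$i) * T$i)"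
      using N by (simp add: prod.distrib N_def[symmetric])
    also have "\<dots> \<le> (real m / N) * (\<Prod>i\<in>(UNIV::'n set). c)"
    proof (intro mult_left_mono prod_mono conjI)
      fix i :: 'n
      show "0 \<le> dist_Z (real m * \<alpha>$i) * T$i"
        using T0 by (simp add: dist_Z_nonneg)
      show "dist_Z (real m * \<alpha>$i) * T$i \<le> c"
        using dist_Z_mult_le_dirichlet_point[OF T0, of n \<alpha> i z] small[of "Some i"]
        unfolding m_def by linarith
    qed (use N in simp)
    also have "\<dots> < c * 1"
    proof (rule mult_less_le_imp_less)
      show "real m / N < c"
        using small[of None] N by (simp add: m_def N_def)
      show "(\<Prod>i\<in>(UNIV::'n set). c) \<le> 1"
        using pos le_one by (simp add: power_le_one)
    qed (use pos N in auto)
    finally show False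
      by simp
  qed
qed

lemma sup_separated_dirichlet_lattice:
  assumes "\<forall>i. 1 \<le> T$i"
  shows "sup_separated c (dirichlet_lattice \<alpha> T)"
  unfolding sup_separated_def
proof (intro ballI impI)
  fix p q assume "p \<in> dirichlet_lattice \<alpha> T" "q \<in> dirichlet_lattice \<alpha> T" "p \<noteq> q"
  then obtain n z m w where "p = dirichlet_point \<alpha> T n z" "q = dirichlet_point \<alpha> T m w"
      and "(n - m, z - w) \<noteq> (0, 0)"
    by (auto simp: dirichlet_lattice_def)
  then show "\<exists>k. c \<le> \<bar>p$k - q$k\<bar>"
    using dirichlet_point_nonzero_ge[OF assms] by (metis dirichlet_point_diff vector_minus_component)
qed

lemma sup_separated_lattice_box:
  assumes "\<forall>i. 1 \<le> T$i"
  shows "sup_separated c (lattice_box \<alpha> T a)"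
  using sup_separated_dirichlet_lattice[OF assms]
  by (rule sup_separated_subset) (auto simp: lattice_box_def)

lemma card_lattice_box_le:
  assumes "\<forall>i. 1 \<le> T$i"
  shows "finite (lattice_box \<alpha> T a)"
    and "card (lattice_box \<alpha> T a) \<le> nat (2 * \<lceil>a / c\<rceil> + 1) ^ CARD('n option)"
proof -
  have "\<forall>p\<in>lattice_box \<alpha> T a. \<forall>k. \<bar>p$k\<bar> \<le> a"
    by (simp add: lattice_box_def)
  with sup_separated_lattice_box[OF assms] show "finite (lattice_box \<alpha> T a)"
    and "card (lattice_box \<alpha> T a) \<le> nat (2 * \<lceil>a / c\<rceil> + 1) ^ CARD('n option)"
    using card_sup_separated_le[OF pos] by blast+
qed

lemma span_lattice_box:
  assumes a: "a \<ge> 1"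
    and small: "real (nat (2 * \<lceil>a / (c / CARD('n))\<rceil> + 1) ^ CARD('n)) < a ^ (CARD('n) + 1) / 2 ^ CARD('n)"
    and T: "\<forall>i. a \<le> T$i"
  shows "span (lattice_box \<alpha> T a) = UNIV"
proof (rule ccontr)
  assume "span (lattice_box \<alpha> T a) \<noteq> UNIV"
  then obtain w where "w \<noteq> 0" and "\<forall>x\<in>span (lattice_box \<alpha> T a). w \<bullet> x = 0"
    using span_not_UNIV_orthogonal by blast
  then have orth: "\<forall>x\<in>lattice_box \<alpha> T a. w \<bullet> x = 0"
    using span_base by blast
  have T1: "\<forall>i. 1 \<le> T$i"
    using T a order_trans by blast
  have "\<forall>x\<in>lattice_box \<alpha> T a. \<forall>k. \<bar>x$k\<bar> \<le> a"
    by (simp add: lattice_box_def)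
  then have "card (lattice_box \<alpha> T a)
      \<le> nat (2 * \<lceil>a / (c / (CARD('n option) - 1))\<rceil> + 1) ^ (CARD('n option) - 1)"
    using sup_separated_lattice_box[OF T1]
    by (intro card_sup_separated_orthogonal_le[OF _ pos _ _ \<open>w \<noteq> 0\<close> orth])
      (simp_all add: card_UNIV_option_finite)
  then have upper: "card (lattice_box \<alpha> T a) \<le> nat (2 * \<lceil>a / (c / CARD('n))\<rceil> + 1) ^ CARD('n)"
    by (simp add: card_UNIV_option_finite)
  obtain G where "G \<subseteq> lattice_box \<alpha> T a" and lower: "a ^ (CARD('n) + 1) / 2 ^ CARD('n) \<le> card G"
    using card_lattice_box_ge[OF a T] by blast
  then have "card G \<le> card (lattice_box \<alpha> T a)"
    by (intro card_mono card_lattice_box_le(1)[OF T1])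
  then have "real (card G) \<le> real (nat (2 * \<lceil>a / (c / CARD('n))\<rceil> + 1) ^ CARD('n))"
    using upper by (simp only: of_nat_le_iff)
  with lower small show False
    by linarith
qed

lemma bounded_covering_radius:
  "\<exists>a\<ge>1. \<exists>E. \<forall>T. (\<forall>i. a \<le> T$i) \<longrightarrow> (\<forall>y. \<exists>n z. \<forall>k. \<bar>dirichlet_point \<alpha> T n z $ k - y$k\<bar> \<le> E)"
proof -
  obtain a where a: "a \<ge> 1"
    and small: "real (nat (2 * \<lceil>a / (c / CARD('n))\<rceil> + 1) ^ CARD('n)) < a ^ (CARD('n) + 1) / 2 ^ CARD('n)"
    using ex_box_size[of "CARD('n)" c] pos le_one by (auto simp: Suc_le_eq)
  define E where "E = real (nat (2 * \<lceil>a / c\<rceil> + 1) ^ CARD('n option)) * a"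
  have "\<exists>n z. \<forall>k. \<bar>dirichlet_point \<alpha> T n z $ k - y$k\<bar> \<le> E" if T: "\<forall>i. a \<le> T$i" for T y
  proof -
    have T1: "\<forall>i. 1 \<le> T$i"
      using T a order_trans by blast
    let ?S = "lattice_box \<alpha> T a"
    have "\<forall>v\<in>?S. \<forall>k. \<bar>v$k\<bar> \<le> a"
      by (simp add: lattice_box_def)
    then obtain u where u: "\<forall>k. \<bar>(\<Sum>v\<in>?S. of_int (u v) *\<^sub>R v)$k - y$k\<bar> \<le> real (card ?S) * a"
      using ex_int_combination_near[OF card_lattice_box_le(1)[OF T1] span_lattice_box[OF a small T]]
      by blast
    have "(\<Sum>v\<in>?S. of_int (u v) *\<^sub>R v) \<in> dirichlet_lattice \<alpha> T"
      by (rule int_combination_in_dirichlet_lattice[OF card_lattice_box_le(1)[OF T1]])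
        (auto simp: lattice_box_def)
    then obtain n z where nz: "(\<Sum>v\<in>?S. of_int (u v) *\<^sub>R v) = dirichlet_point \<alpha> T n z"
      by (auto simp: dirichlet_lattice_def)
    have "real (card ?S) \<le> real (nat (2 * \<lceil>a / c\<rceil> + 1) ^ CARD('n option))"
      using card_lattice_box_le(2)[OF T1, of a] by (simp only: of_nat_le_iff)
    then have "real (card ?S) * a \<le> E"
      using a unfolding E_def by (intro mult_right_mono) auto
    then have "\<bar>dirichlet_point \<alpha> T n z $ k - y$k\<bar> \<le> E" for k
      using u[rule_format, of k] unfolding nz by linarith
    then show ?thesis
      by blast
  qed
  then show ?thesis
    using a by blast
qed

lemma uniform_covering:
  assumes "r > 0"
  shows "\<exists>C. \<forall>T. (\<forall>i. 1 \<le> T$i) \<longrightarrow> (\<forall>y0 yv. \<exists>n z.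
    \<bar>dirichlet_point \<alpha> T n z $ None - y0\<bar> \<le> C \<and> (\<forall>i. \<bar>dirichlet_point \<alpha> T n z $ Some i - yv$i\<bar> \<le> r))"
proof -
  obtain a E where a: "a \<ge> 1"
    and cov: "\<And>T y. \<forall>i. a \<le> T$i \<Longrightarrow> \<exists>n z. \<forall>k. \<bar>dirichlet_point \<alpha> T n z $ k - y$k\<bar> \<le> E"
    using bounded_covering_radius by blast
  define l where "l = max a (E / r)"
  have l: "a \<le> l" "0 < l"
    using a by (auto simp: l_def)
  have "E / r \<le> l"
    by (simp add: l_def)
  then have "E / l \<le> r"
    using assms l(2) by (simp add: divide_le_eq mult.commute)
  have "\<exists>n z. \<bar>dirichlet_point \<alpha> T n z $ None - y0\<bar> \<le> E * l ^ CARD('n)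
      \<and> (\<forall>i. \<bar>dirichlet_point \<alpha> T n z $ Some i - yv$i\<bar> \<le> r)" if T: "\<forall>i. 1 \<le> T$i" for T y0 yv
  proof -
    have "a \<le> (l *\<^sub>R T)$i" for i
    proof -
      have "l * 1 \<le> l * T$i"
        using l(2) T by (intro mult_left_mono) auto
      then show ?thesis
        using l(1) by simp
    qed
    then obtain n z where close: "\<forall>k. \<bar>dirichlet_point \<alpha> (l *\<^sub>R T) n z $ k
        - (\<chi> k. case k of None \<Rightarrow> y0 / l ^ CARD('n) | Some i \<Rightarrow> l * yv$i) $ k\<bar> \<le> E"
      using cov by blast
    then have "\<forall>i. \<bar>dirichlet_point \<alpha> T n z $ Some i - yv$i\<bar> \<le> r"
      using dirichlet_point_scaleR_close(2)[OF l(2) close] \<open>E / l \<le> r\<close> by (blast intro: order_trans)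
    with dirichlet_point_scaleR_close(1)[OF l(2) close] show ?thesis
      by blast
  qed
  then show ?thesis
    by blast
qed

text \<open>A return time \<open>m\<close> is read off from the time coordinate \<open>m / N\<close> of its lattice point.\<close>
lemma num_return_times_le:
  assumes T: "\<forall>i. 1 \<le> T$i"
    and ret: "\<forall>q\<in>D'. \<exists>m z. tau \<alpha> D' q = enat m \<and> (\<forall>k. \<bar>dirichlet_point \<alpha> T (int m) z $ k\<bar> \<le> H)"
  shows "num_return_times \<alpha> D' \<le> enat (nat (2 * \<lceil>H / c\<rceil> + 1) ^ CARD('n option))"
proof -
  define N where "N = (\<Prod>i\<in>UNIV. T$i)"
  have N: "N > 0"
    unfolding N_def using T by (intro prod_pos) (meson less_le_trans zero_less_one)
  define time where "time p = enat (nat (round (p $ None * N)))" for p :: "real^('n option)"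
  have sub: "tau \<alpha> D' ` D' \<subseteq> time ` lattice_box \<alpha> T H"
  proof
    fix t assume "t \<in> tau \<alpha> D' ` D'"
    then obtain m z where "t = enat m" and "\<forall>k. \<bar>dirichlet_point \<alpha> T (int m) z $ k\<bar> \<le> H"
      using ret by blast
    moreover have "time (dirichlet_point \<alpha> T (int m) z) = enat m"
      using N by (simp add: time_def N_def[symmetric])
    moreover have "dirichlet_point \<alpha> T (int m) z \<in> lattice_box \<alpha> T H"
      using calculation(2) by (simp add: lattice_box_def)
    ultimately show "t \<in> time ` lattice_box \<alpha> T H"
      by (metis image_eqI)
  qed
  have fin: "finite (time ` lattice_box \<alpha> T H)"
    using card_lattice_box_le(1)[OF T] by simp
  then have "finite (tau \<alpha> D' ` D')"
    using sub by (rule finite_subset[rotated])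
  moreover have "card (tau \<alpha> D' ` D') \<le> card (lattice_box \<alpha> T H)"
    using card_mono[OF fin sub] card_image_le[OF card_lattice_box_le(1)[OF T]] by (rule order_trans)
  ultimately show ?thesis
    using card_lattice_box_le(2)[OF T, of H] unfolding num_return_times_def by simp
qed

end

lemma ex_uniform_lower_bound:
  fixes f :: "nat \<Rightarrow> real"
  assumes pos: "\<And>m. m \<ge> 1 \<Longrightarrow> 0 < f m" and "0 < b"
    and tail: "eventually (\<lambda>n. b < f n) sequentially"
  shows "\<exists>c>0. \<forall>m\<ge>1. c \<le> f m"
proof -
  obtain N0 where N0: "\<And>n. n \<ge> N0 \<Longrightarrow> b < f n"
    using tail by (auto simp: eventually_sequentially)
  define c where "c = Min (insert b (f ` {1..N0}))"
  have "c > 0"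
    unfolding c_def using pos \<open>0 < b\<close> by auto
  moreover have "c \<le> f m" if "m \<ge> 1" for m
  proof (cases "m \<le> N0")
    case True
    then show ?thesis
      using that unfolding c_def by (intro Min_le) auto
  next
    case False
    then have "c \<le> b" "b < f m"
      using N0 unfolding c_def by auto
    then show ?thesis
      by simp
  qed
  ultimately show ?thesis
    by blast
qed

lemma liminf_ne_0_imp_mult_badly_approximable:
  fixes \<alpha> :: "real^'n"
  assumes "liminf (\<lambda>n::nat. ereal (real n * (\<Prod>i\<in>UNIV. dist_Z (real n * \<alpha>$i)))) \<noteq> 0"
  shows "\<exists>c. mult_badly_approximable \<alpha> c"
proof -
  define f where "f n = real n * (\<Prod>i\<in>UNIV. dist_Z (real n * \<alpha>$i))" for n :: nat
  have f_nonneg: "f n \<ge> 0" for n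
    unfolding f_def by (simp add: prod_nonneg dist_Z_nonneg)
  then have "0 \<le> liminf (\<lambda>n. ereal (f n))"
    by (intro Liminf_bounded) simp
  then have "0 < liminf (\<lambda>n. ereal (f n))"
    using assms by (simp add: f_def order_le_less)
  then obtain b where b: "0 < b" "ereal b < liminf (\<lambda>n. ereal (f n))"
    using ereal_dense2 by (metis ereal_less(2))
  then have tail: "eventually (\<lambda>n. b < f n) sequentially"
    using less_LiminfD by fastforce
  \<comment> \<open>If \<open>f m = 0\<close>, some \<open>m \<alpha>\<^sub>i\<close> is an integer, and then so is every multiple of it.\<close>
  have "f m > 0" if "m \<ge> 1" for m
  proof (rule ccontr)
    assume "\<not> f m > 0"
    then have "(\<Prod>i\<in>UNIV. dist_Z (real m * \<alpha>$i)) = 0"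
      using f_nonneg[of m] that by (simp add: f_def)
    then obtain i where "real m * \<alpha>$i \<in> \<int>"
      by (auto simp: dist_Z_eq_0_iff)
    moreover have "real (k * m) * \<alpha>$i = of_nat k * (real m * \<alpha>$i)" for k
      by simp
    ultimately have "real (k * m) * \<alpha>$i \<in> \<int>" for k
      by (metis Ints_mult Ints_of_nat)
    then have "f (k * m) = 0" for k
      by (auto simp: f_def dist_Z_eq_0_iff)
    moreover obtain N0 where "\<And>n. n \<ge> N0 \<Longrightarrow> b < f n"
      using tail by (auto simp: eventually_sequentially)
    then have "b < f (N0 * m)"
      using that by simp
    ultimately show False
      using b(1) by simp
  qed
  then show ?thesis
    using ex_uniform_lower_bound[OF _ b(1) tail] unfolding mult_badly_approximable_def f_def by blast
qed

lemma interior_imp_cube_subset: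
  fixes D :: "(real^'n) set"
  assumes "interior D \<noteq> {}"
  shows "\<exists>x0 r. r > 0 \<and> (\<forall>x. (\<forall>i. \<bar>x$i - x0$i\<bar> \<le> r) \<longrightarrow> x \<in> D)"
proof -
  obtain x0 e where e: "e > 0" "ball x0 e \<subseteq> D"
    using assms mem_interior by blast
  define r where "r = e / (2 * CARD('n))"
  have "x \<in> D" if "\<forall>i. \<bar>x$i - x0$i\<bar> \<le> r" for x
  proof -
    have "dist x0 x \<le> (\<Sum>i\<in>UNIV. \<bar>(x - x0)$i\<bar>)"
      using norm_le_l1_cart[of "x - x0"] by (simp add: dist_norm norm_minus_commute)
    also have "\<dots> \<le> (\<Sum>i\<in>(UNIV::'n set). r)"
      using that by (intro sum_mono) simp
    also have "\<dots> < e"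
      using e by (simp add: r_def)
    finally show ?thesis
      using e by auto
  qed
  moreover have "r > 0"
    using e by (simp add: r_def)
  ultimately show ?thesis
    by blast
qed

theorem theorem1p7:
  fixes D :: "(real^'n) set" and \<alpha> :: "real^'n"
  assumes "CARD('n) \<ge> 2"
    and "bounded D" and "convex D" and "interior D \<noteq> {}"
    and "(SUP T\<in>{T :: real^'n. \<forall>i. T $ i \<ge> 1}. num_return_times \<alpha> (scale_inv D T)) = \<infinity>"
  shows "liminf (\<lambda>n::nat. ereal (real n * (\<Prod>i\<in>UNIV. dist_Z (real n * \<alpha> $ i)))) = 0"
proof (rule ccontr)
  assume "liminf (\<lambda>n::nat. ereal (real n * (\<Prod>i\<in>UNIV. dist_Z (real n * \<alpha> $ i)))) \<noteq> 0"
  then obtain c where "mult_badly_approximable \<alpha> c"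
    using liminf_ne_0_imp_mult_badly_approximable by blast
  then interpret mult_badly_approximable \<alpha> c .
  obtain x0 r where "r > 0" and cube: "\<forall>x. (\<forall>i. \<bar>x$i - x0$i\<bar> \<le> r) \<longrightarrow> x \<in> D"
    using interior_imp_cube_subset[OF assms(4)] by blast
  obtain B where B: "\<forall>x\<in>D. \<forall>i. \<bar>x$i\<bar> \<le> B"
    using assms(2) unfolding bounded_iff by (meson component_le_norm_cart order_trans)
  obtain C where cov: "\<And>T. \<forall>i. 1 \<le> T$i \<Longrightarrow> \<forall>y0 yv. \<exists>n z.
      \<bar>dirichlet_point \<alpha> T n z $ None - y0\<bar> \<le> C \<and> (\<forall>i. \<bar>dirichlet_point \<alpha> T n z $ Some i - yv$i\<bar> \<le> r)"
    using uniform_covering[OF \<open>r > 0\<close>] by blast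
  let ?bound = "enat (nat (2 * \<lceil>max (2 * C + 1) (2 * B) / c\<rceil> + 1) ^ CARD('n option))"
  have "num_return_times \<alpha> (scale_inv D T) \<le> ?bound" if T: "\<forall>i. 1 \<le> T$i" for T
    using tau_le_by_covering[OF T cube B cov[OF T]]
    by (intro num_return_times_le[OF T]) blast
  then have "(SUP T\<in>{T :: real^'n. \<forall>i. T $ i \<ge> 1}. num_return_times \<alpha> (scale_inv D T)) \<le> ?bound"
    by (intro SUP_least) auto
  with assms(5) show False
    by simp
qed

end
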